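(* Let $G$ be a graph, $\mathcal{B}$ a set of balls of $G$, and $X\subset V(G)$ a set such that $|V(H)\cup X|\le p$ for every connected component $H$ of $G-X$, where $p$ is the vertex integrity of $G$. Let $\mathcal{H}$ be the set of connected components of $G-X$. Then the number of equivalence classes of the twin-block relation $\sim_{\mathcal{B}}$ on $\mathcal{H}$ is at most $2^{\mathcal{O}(p^3)}$.
   Context: For a graph $G$, $r\ge 0$ and $v\in V(G)$, the ball $B_r(v)$ is the set of vertices at distance at most $r$ from $v$. The vertex integrity of $G$ is the minimum $b$ such that there is $X\subset V(G)$ with $|V(H)\cup X|\le b$ for every connected component $H$ of $G-X$. Two components $H,H'\in\mathcal{H}$ are twin-blocks with respect to $\mathcal{B}$, written $H\sim_{\mathcal{B}}H'$, if there is an isomorphism $\alpha$ from $H$ to $H'$ such that (i) for each $u\in V(H)$ and $v\in X$, $uv\in E(G)$ iff $\alpha(u)v\in E(G)$, and (ii) for each $u\in V(H)$ and $r\in\mathbb{N}$, $B_r(u)\in\mathcal{B}$ iff $B_r(\alpha(u))\in\mathcal{B}$. This is an equivalence relation. *)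

theory Defs
  imports Main
begin

definition graph :: "'a set \<Rightarrow> ('a \<Rightarrow> 'a \<Rightarrow> bool) \<Rightarrow> bool" where
  "graph V E \<longleftrightarrow> finite V \<and> (\<forall>x y. E x y \<longrightarrow> x \<in> V \<and> y \<in> V)
     \<and> (\<forall>x y. E x y \<longrightarrow> E y x) \<and> (\<forall>x. \<not> E x x)"

fun ball :: "('a \<Rightarrow> 'a \<Rightarrow> bool) \<Rightarrow> nat \<Rightarrow> 'a \<Rightarrow> 'a set" where
  "ball E 0 v = {v}"
| "ball E (Suc r) v = ball E r v \<union> {u. \<exists>w \<in> ball E r v. E w u}"

definition balls :: "'a set \<Rightarrow> ('a \<Rightarrow> 'a \<Rightarrow> bool) \<Rightarrow> 'a set set" where
  "balls V E = {ball E r v | r v. v \<in> V}"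

definition comp_of :: "('a \<Rightarrow> 'a \<Rightarrow> bool) \<Rightarrow> 'a set \<Rightarrow> 'a \<Rightarrow> 'a set" where
  "comp_of E S x = {y \<in> S. (\<lambda>a b. E a b \<and> a \<in> S \<and> b \<in> S)\<^sup>*\<^sup>* x y}"

definition comps :: "('a \<Rightarrow> 'a \<Rightarrow> bool) \<Rightarrow> 'a set \<Rightarrow> 'a set set" where
  "comps E S = {comp_of E S x | x. x \<in> S}"

text \<open>Vertex integrity (standard convention: |X| + max component size, with max over no components = 0).\<close>
definition vertex_integrity :: "'a set \<Rightarrow> ('a \<Rightarrow> 'a \<Rightarrow> bool) \<Rightarrow> nat" where
  "vertex_integrity V E = (LEAST b. \<exists>X \<subseteq> V. card X \<le> b \<and>
      (\<forall>H \<in> comps E (V - X). card (H \<union> X) \<le> b))"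

definition twin_blocks ::
  "('a \<Rightarrow> 'a \<Rightarrow> bool) \<Rightarrow> 'a set \<Rightarrow> 'a set set \<Rightarrow> 'a set \<Rightarrow> 'a set \<Rightarrow> bool" where
  "twin_blocks E X Bs H H' \<longleftrightarrow> (\<exists>\<alpha>. bij_betw \<alpha> H H'
      \<and> (\<forall>u \<in> H. \<forall>v \<in> H. E u v \<longleftrightarrow> E (\<alpha> u) (\<alpha> v))
      \<and> (\<forall>u \<in> H. \<forall>v \<in> X. E u v \<longleftrightarrow> E (\<alpha> u) v)
      \<and> (\<forall>u \<in> H. \<forall>r. ball E r u \<in> Bs \<longleftrightarrow> ball E r (\<alpha> u) \<in> Bs))"

definition twin_rel ::
  "('a \<Rightarrow> 'a \<Rightarrow> bool) \<Rightarrow> 'a set \<Rightarrow> 'a set set \<Rightarrow> 'a set set \<Rightarrow> ('a set \<times> 'a set) set" where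
  "twin_rel E X Bs \<H> = {(H, H'). H \<in> \<H> \<and> H' \<in> \<H> \<and> twin_blocks E X Bs H H'}"

end

theory Submission
  imports Defs
begin

text \<open>
  A component \<open>H\<close> of \<open>G - X\<close> is determined up to twins by a finite signature: its size and,
  along the sorted enumeration of \<open>H\<close>, the adjacencies inside \<open>H\<close> and to \<open>X\<close> and which balls
  \<open>B_r(u)\<close> with \<open>r \<le> D\<close> belong to \<open>\<B>\<close>. Larger radii carry no information because every ball
  stops growing at radius \<open>D = p(p+1) + p\<close>: a shortest path meets each vertex of \<open>X\<close> at most
  once, and between two of them it stays inside one component of \<open>G - X\<close>, which has at most
  \<open>p\<close> vertices. Counting signatures gives at most
  \<open>(p+1) 2^(p^2) 2^(p|X|) 2^(p(D+1)) \<le> 2^(7p^3)\<close> classes.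
  Only the bound \<open>|V(H) \<union> X| \<le> p\<close> is used: neither that \<open>p\<close> is the vertex integrity nor
  that \<open>\<B>\<close> consists of balls.
\<close>

lemma ball_mono: "r \<le> s \<Longrightarrow> ball E r u \<subseteq> ball E s u"
  by (induction s) (auto simp: le_Suc_eq)

lemma ball_subset: "graph V E \<Longrightarrow> u \<in> V \<Longrightarrow> ball E r u \<subseteq> V"
  by (induction r) (auto simp: graph_def)

lemma finite_ball: "graph V E \<Longrightarrow> u \<in> V \<Longrightarrow> finite (ball E r u)"
  using ball_subset finite_subset graph_def by metis

lemma ball_exact_distance_pred:
  assumes "v \<in> ball E (Suc m) u" "\<forall>k < Suc m. v \<notin> ball E k u"
  obtains w where "w \<in> ball E m u" "\<forall>k < m. w \<notin> ball E k u" "E w v"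
proof -
  obtain w where w: "w \<in> ball E m u" "E w v"
    using assms by auto
  have "w \<notin> ball E k u" if "k < m" for k
    using assms(2) w(2) that by auto
  with w that show ?thesis by blast
qed

lemma comp_of_subset: "comp_of E S x \<subseteq> S"
  by (auto simp: comp_of_def)

lemma comp_of_self: "x \<in> S \<Longrightarrow> x \<in> comp_of E S x"
  by (simp add: comp_of_def)

lemma comp_of_outside: "x \<notin> S \<Longrightarrow> comp_of E S x = {}"
  by (auto simp: comp_of_def elim: converse_rtranclpE)

lemma comp_of_edge:
  assumes "graph V E" "E a b" "a \<in> S" "b \<in> S"
  shows "comp_of E S a = comp_of E S b"
proof -
  let ?R = "\<lambda>a b. E a b \<and> a \<in> S \<and> b \<in> S"
  have "?R a b" "?R b a"
    using assms by (auto simp: graph_def)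
  then have "?R\<^sup>*\<^sup>* a y \<longleftrightarrow> ?R\<^sup>*\<^sup>* b y" for y
    by (blast intro: converse_rtranclp_into_rtranclp)
  then show ?thesis
    by (simp add: comp_of_def)
qed

lemma comp_of_subset_comp_of_neighbour:
  "graph V E \<Longrightarrow> E a b \<Longrightarrow> b \<in> S \<Longrightarrow> comp_of E S a \<subseteq> comp_of E S b"
  by (cases "a \<in> S") (simp_all add: comp_of_edge comp_of_outside)

lemma finite_comp_of: "finite S \<Longrightarrow> finite (comp_of E S x)"
  using comp_of_subset finite_subset by metis

lemma comps_subset: "H \<in> comps E S \<Longrightarrow> H \<subseteq> S"
  by (auto simp: comps_def comp_of_def)

lemma card_comp_of_le:
  assumes "graph V E" "X \<subseteq> V" "\<forall>H \<in> comps E (V - X). card (H \<union> X) \<le> p"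
  shows "card (comp_of E (V - X) x) \<le> p"
proof (cases "x \<in> V - X")
  case True
  have "finite V"
    using assms(1) by (simp add: graph_def)
  then have "card (comp_of E (V - X) x) \<le> card (comp_of E (V - X) x \<union> X)"
    using assms(2) comp_of_subset[of E "V - X" x] by (intro card_mono) (auto intro: finite_subset)
  also have "\<dots> \<le> p"
    using assms(3) True by (auto simp: comps_def)
  finally show ?thesis .
qed (simp add: comp_of_outside)

lemma card_comp_of_Int_le:
  assumes "graph V E" "card (comp_of E (V - X) x) \<le> q"
  shows "card (comp_of E (V - X) x \<inter> A) \<le> q"
proof -
  have "finite (comp_of E (V - X) x)"
    using assms(1) finite_comp_of[of "V - X"] by (simp add: graph_def)
  then show ?thesis
    using card_mono[OF _ Int_lower1] assms(2) le_trans by blast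
qed

text \<open>
  The right-hand side is a potential that grows by at least one along each step of a shortest
  path: the step either reaches a new vertex of \<open>X\<close>, or a new vertex of the component of
  \<open>G - X\<close> of its endpoint (\<open>comp_of\<close> is empty on \<open>X\<close>, which makes the two cases fit together).
\<close>
lemma exact_distance_bound:
  assumes G: "graph V E" and u: "u \<in> V"
    and comp: "\<And>x. card (comp_of E (V - X) x) \<le> q"
    and "v \<in> ball E m u" "\<forall>k < m. v \<notin> ball E k u"
  shows "m + 1 \<le> card (X \<inter> ball E m u) * (q + 1) + card (comp_of E (V - X) v \<inter> ball E m u)"
  using assms(4,5)
proof (induction m arbitrary: v)
  case 0
  then have "v = u" by simp
  then show ?case
    using u by (cases "u \<in> X") (simp_all add: comp_of_self)
next
  case (Suc m)
  let ?B = "ball E m u" and ?B' = "ball E (Suc m) u" and ?C = "comp_of E (V - X)"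
  obtain w where w: "w \<in> ?B" "\<forall>k < m. w \<notin> ball E k u" "E w v"
    using ball_exact_distance_pred[OF Suc.prems] .
  have IH: "m + 1 \<le> card (X \<inter> ?B) * (q + 1) + card (?C w \<inter> ?B)"
    using Suc.IH[OF w(1,2)] .
  have fin: "finite ?B'"
    using finite_ball[OF G u] .
  have v: "v \<in> ?B'" "v \<notin> ?B"
    using Suc.prems by auto
  have "?B \<subseteq> ?B'"
    by (rule ball_mono) simp
  have X_mono: "card (X \<inter> ?B) \<le> card (X \<inter> ?B')"
    using fin \<open>?B \<subseteq> ?B'\<close> by (intro card_mono) auto
  show ?case
  proof (cases "v \<in> X")
    case True
    have "card (?C w \<inter> ?B) \<le> q"
      using card_comp_of_Int_le[OF G comp] .
    moreover have "insert v (X \<inter> ?B) \<subseteq> X \<inter> ?B'"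
      using True v \<open>?B \<subseteq> ?B'\<close> by blast
    then have "card (X \<inter> ?B) + 1 \<le> card (X \<inter> ?B')"
      using card_mono[OF _ \<open>insert v (X \<inter> ?B) \<subseteq> _\<close>] fin v(2) by simp
    then have "(card (X \<inter> ?B) + 1) * (q + 1) \<le> card (X \<inter> ?B') * (q + 1)"
      by (rule mult_right_mono) simp
    ultimately show ?thesis
      using IH by (simp add: algebra_simps)
  next
    case False
    have "v \<in> V"
      using G w(3) by (simp add: graph_def)
    then have "insert v (?C w \<inter> ?B) \<subseteq> ?C v \<inter> ?B'"
      using False v \<open>?B \<subseteq> ?B'\<close> comp_of_self[of v "V - X" E]
        comp_of_subset_comp_of_neighbour[OF G w(3), of "V - X"] by blast
    then have "card (?C w \<inter> ?B) + 1 \<le> card (?C v \<inter> ?B')"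
      using card_mono[OF _ \<open>insert v (?C w \<inter> ?B) \<subseteq> _\<close>] fin v(2) by simp
    moreover have "card (X \<inter> ?B) * (q + 1) \<le> card (X \<inter> ?B') * (q + 1)"
      using X_mono by (rule mult_right_mono) simp
    ultimately show ?thesis
      using IH by linarith
  qed
qed

lemma exact_distance_less:
  assumes G: "graph V E" and X: "X \<subseteq> V" and u: "u \<in> V"
    and comp: "\<And>x. card (comp_of E (V - X) x) \<le> q"
    and v: "v \<in> ball E m u" "\<forall>k < m. v \<notin> ball E k u"
  shows "m < card X * (q + 1) + q"
proof -
  have "finite X"
    using G X finite_subset by (auto simp: graph_def)
  then have "card (X \<inter> ball E m u) * (q + 1) \<le> card X * (q + 1)"
    by (intro mult_right_mono card_mono) auto
  then show ?thesis
    using exact_distance_bound[OF G u comp v] card_comp_of_Int_le[OF G comp, of v "ball E m u"]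
    by linarith
qed

lemma ball_stable:
  assumes G: "graph V E" and X: "X \<subseteq> V" and u: "u \<in> V"
    and comp: "\<And>x. card (comp_of E (V - X) x) \<le> q"
    and "card X * (q + 1) + q \<le> D" "D \<le> r"
  shows "ball E r u = ball E D u"
proof -
  have stops: "ball E (Suc s) u = ball E s u" if "D \<le> s" for s
  proof (rule ccontr)
    assume "ball E (Suc s) u \<noteq> ball E s u"
    then obtain v where "v \<in> ball E (Suc s) u" "v \<notin> ball E s u"
      using ball_mono[of s "Suc s" E u] by auto
    moreover have "\<forall>k < Suc s. v \<notin> ball E k u"
      using ball_mono \<open>v \<notin> ball E s u\<close> by (metis less_Suc_eq_le subsetD)
    ultimately have "Suc s < card X * (q + 1) + q"
      using exact_distance_less[OF G X u comp] by blast
    then show False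
      using assms(5) that by linarith
  qed
  show ?thesis
    using assms(6) by (induction r rule: dec_induct) (simp_all add: stops del: ball.simps)
qed

lemma twin_blocks_trans:
  assumes "twin_blocks E X Bs A B" "twin_blocks E X Bs B C"
  shows "twin_blocks E X Bs A C"
proof -
  obtain \<alpha> where \<alpha>: "bij_betw \<alpha> A B" "\<forall>u \<in> A. \<forall>v \<in> A. E u v \<longleftrightarrow> E (\<alpha> u) (\<alpha> v)"
      "\<forall>u \<in> A. \<forall>v \<in> X. E u v \<longleftrightarrow> E (\<alpha> u) v" "\<forall>u \<in> A. \<forall>r. ball E r u \<in> Bs \<longleftrightarrow> ball E r (\<alpha> u) \<in> Bs"
    using assms(1) unfolding twin_blocks_def by blast
  obtain \<beta> where \<beta>: "bij_betw \<beta> B C" "\<forall>u \<in> B. \<forall>v \<in> B. E u v \<longleftrightarrow> E (\<beta> u) (\<beta> v)"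
      "\<forall>u \<in> B. \<forall>v \<in> X. E u v \<longleftrightarrow> E (\<beta> u) v" "\<forall>u \<in> B. \<forall>r. ball E r u \<in> Bs \<longleftrightarrow> ball E r (\<beta> u) \<in> Bs"
    using assms(2) unfolding twin_blocks_def by blast
  have "\<alpha> u \<in> B" if "u \<in> A" for u
    using bij_betw_apply[OF \<alpha>(1) that] .
  with \<alpha> \<beta> show ?thesis
    unfolding twin_blocks_def by (intro exI[of _ "\<beta> \<circ> \<alpha>"]) (auto intro: bij_betw_trans)
qed

lemma trans_twin_rel: "trans (twin_rel E X Bs \<H>)"
  by (auto simp: trans_def twin_rel_def intro: twin_blocks_trans)

lemma twin_blocks_if_enumerations_agree:
  assumes e: "bij_betw e {..<n} H" and e': "bij_betw e' {..<n} H'"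
    and inside: "\<And>i j. i < n \<Longrightarrow> j < n \<Longrightarrow> E (e i) (e j) \<longleftrightarrow> E (e' i) (e' j)"
    and to_X: "\<And>i x. i < n \<Longrightarrow> x \<in> X \<Longrightarrow> E (e i) x \<longleftrightarrow> E (e' i) x"
    and balls: "\<And>i r. i < n \<Longrightarrow> ball E r (e i) \<in> Bs \<longleftrightarrow> ball E r (e' i) \<in> Bs"
  shows "twin_blocks E X Bs H H'"
proof -
  define \<alpha> where "\<alpha> = e' \<circ> the_inv_into {..<n} e"
  have "bij_betw \<alpha> H H'"
    unfolding \<alpha>_def using bij_betw_trans[OF bij_betw_the_inv_into[OF e] e'] .
  moreover have "\<alpha> (e i) = e' i" if "i < n" for i
    using e that by (simp add: \<alpha>_def bij_betw_def the_inv_into_f_f)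
  moreover have "H = e ` {..<n}"
    using e by (simp add: bij_betw_def)
  ultimately show ?thesis
    unfolding twin_blocks_def by (intro exI[of _ \<alpha>]) (auto simp: inside to_X balls)
qed

text \<open>Position \<open>i < card H\<close> stands for the \<open>i\<close>-th smallest vertex of \<open>H\<close>.\<close>
definition block_signature ::
  "('a::linorder \<Rightarrow> 'a \<Rightarrow> bool) \<Rightarrow> 'a set \<Rightarrow> 'a set set \<Rightarrow> nat \<Rightarrow> 'a set
    \<Rightarrow> nat \<times> (nat \<times> nat) set \<times> (nat \<times> 'a) set \<times> (nat \<times> nat) set" where
  "block_signature E X Bs D H = (let e = (!) (sorted_list_of_set H); n = card H in
     (n, {(i, j). i < n \<and> j < n \<and> E (e i) (e j)},
         {(i, x). i < n \<and> x \<in> X \<and> E (e i) x},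
         {(i, r). i < n \<and> r \<le> D \<and> ball E r (e i) \<in> Bs}))"

lemma bij_betw_sorted_list_of_set:
  "finite H \<Longrightarrow> bij_betw ((!) (sorted_list_of_set H)) {..<card H} H"
  by (rule bij_betw_nth) simp_all

lemma twin_blocks_if_block_signature_eq:
  assumes fin: "finite H" "finite H'"
    and eq: "block_signature E X Bs D H = block_signature E X Bs D H'"
    and stable: "\<And>w r. w \<in> H \<union> H' \<Longrightarrow> D \<le> r \<Longrightarrow> ball E r w = ball E D w"
  shows "twin_blocks E X Bs H H'"
proof -
  define e where "e = (!) (sorted_list_of_set H)"
  define e' where "e' = (!) (sorted_list_of_set H')"
  define n where "n = card H"
  have n: "card H' = n"
    using eq by (simp add: block_signature_def Let_def n_def)
  have e: "bij_betw e {..<n} H" and e': "bij_betw e' {..<n} H'"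
    using bij_betw_sorted_list_of_set[OF fin(1)] bij_betw_sorted_list_of_set[OF fin(2)] n
    unfolding e_def e'_def n_def by simp_all
  have sets:
      "{(i, j). i < n \<and> j < n \<and> E (e i) (e j)} = {(i, j). i < n \<and> j < n \<and> E (e' i) (e' j)}"
      "{(i, x). i < n \<and> x \<in> X \<and> E (e i) x} = {(i, x). i < n \<and> x \<in> X \<and> E (e' i) x}"
      "{(i, r). i < n \<and> r \<le> D \<and> ball E r (e i) \<in> Bs} = {(i, r). i < n \<and> r \<le> D \<and> ball E r (e' i) \<in> Bs}"
    using eq n unfolding block_signature_def Let_def e_def e'_def n_def by simp_all
  have "ball E r (e i) \<in> Bs \<longleftrightarrow> ball E r (e' i) \<in> Bs" if "i < n" for i r
  proof -
    have "e i \<in> H" "e' i \<in> H'"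
      using that bij_betw_apply[OF e] bij_betw_apply[OF e'] by auto
    then have "ball E r (e i) = ball E (min r D) (e i)" "ball E r (e' i) = ball E (min r D) (e' i)"
      using stable[of "e i" r] stable[of "e' i" r] by (simp_all add: min_def)
    then show ?thesis
      using that arg_cong[OF sets(3), of "\<lambda>S. (i, min r D) \<in> S"] by simp
  qed
  moreover have "E (e i) (e j) \<longleftrightarrow> E (e' i) (e' j)" if "i < n" "j < n" for i j
    using that arg_cong[OF sets(1), of "\<lambda>S. (i, j) \<in> S"] by simp
  moreover have "E (e i) x \<longleftrightarrow> E (e' i) x" if "i < n" "x \<in> X" for i x
    using that arg_cong[OF sets(2), of "\<lambda>S. (i, x) \<in> S"] by simp
  ultimately show ?thesis
    using twin_blocks_if_enumerations_agree[OF e e'] by blast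
qed

lemma block_signature_in:
  "card H \<le> p \<Longrightarrow> block_signature E X Bs D H
    \<in> {..p} \<times> Pow ({..<p} \<times> {..<p}) \<times> Pow ({..<p} \<times> X) \<times> Pow ({..<p} \<times> {..D})"
  by (auto simp: block_signature_def Let_def)

lemma card_block_signatures_le:
  assumes "finite X" "\<forall>H \<in> \<H>. card H \<le> p"
  shows "card (block_signature E X Bs D ` \<H>)
    \<le> (p + 1) * 2 ^ (p * p) * 2 ^ (p * card X) * 2 ^ (p * (D + 1))"
proof -
  let ?S = "{..p} \<times> Pow ({..<p} \<times> {..<p}) \<times> Pow ({..<p} \<times> X) \<times> Pow ({..<p} \<times> {..D})"
  have "card (block_signature E X Bs D ` \<H>) \<le> card ?S"
    using assms block_signature_in by (intro card_mono) blast+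
  also have "card ?S = (p + 1) * 2 ^ (p * p) * 2 ^ (p * card X) * 2 ^ (p * (D + 1))"
    using assms(1) by (simp add: card_cartesian_product card_Pow algebra_simps)
  finally show ?thesis .
qed

lemma card_quotient_le_card_image:
  assumes "finite (f ` A)" "trans R"
    and "\<And>x y. x \<in> A \<Longrightarrow> y \<in> A \<Longrightarrow> f x = f y \<Longrightarrow> (x, y) \<in> R"
  shows "card (A // R) \<le> card (f ` A)"
proof -
  have "R `` {x} = R `` {inv_into A f (f x)}" if "x \<in> A" for x
  proof -
    let ?y = "inv_into A f (f x)"
    have "?y \<in> A" "f ?y = f x"
      using that by (simp_all add: inv_into_into f_inv_into_f)
    then have "(x, ?y) \<in> R" "(?y, x) \<in> R"
      using assms(3) that by metis+
    then show ?thesis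
      using assms(2) by (blast dest: transD)
  qed
  then have "A // R \<subseteq> (\<lambda>c. R `` {inv_into A f c}) ` f ` A"
    by (auto simp: quotient_def)
  then show ?thesis
    using assms(1) surj_card_le by blast
qed

lemma card_twin_classes_le_card_block_signatures:
  fixes E :: "'a::linorder \<Rightarrow> 'a \<Rightarrow> bool"
  assumes G: "graph V E" and S: "S \<subseteq> V"
    and stable: "\<And>w r. w \<in> V \<Longrightarrow> D \<le> r \<Longrightarrow> ball E r w = ball E D w"
  shows "card (comps E S // twin_rel E X Bs (comps E S))
    \<le> card (block_signature E X Bs D ` comps E S)"
proof (rule card_quotient_le_card_image)
  have "finite S"
    using G S finite_subset by (auto simp: graph_def)
  then have fin: "finite H" if "H \<in> comps E S" for H
    using comps_subset[OF that] finite_subset by blast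
  have "comps E S \<subseteq> Pow S"
    using comps_subset by blast
  then show "finite (block_signature E X Bs D ` comps E S)"
    using \<open>finite S\<close> finite_subset by blast
  show "trans (twin_rel E X Bs (comps E S))"
    by (rule trans_twin_rel)
  fix H H' assume "H \<in> comps E S" "H' \<in> comps E S"
    and "block_signature E X Bs D H = block_signature E X Bs D H'"
  moreover have "H \<union> H' \<subseteq> V"
    using comps_subset S \<open>H \<in> comps E S\<close> \<open>H' \<in> comps E S\<close> by blast
  ultimately show "(H, H') \<in> twin_rel E X Bs (comps E S)"
    using twin_blocks_if_block_signature_eq[OF fin fin] stable
    unfolding twin_rel_def by blast
qed

lemma card_separator_le:
  assumes G: "graph V E" and X: "X \<subseteq> V"
    and bound: "\<forall>H \<in> comps E (V - X). card (H \<union> X) \<le> p" and "x \<in> V - X"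
  shows "card X \<le> p"
proof -
  let ?H = "comp_of E (V - X) x"
  have "finite (?H \<union> X)"
    using G X comp_of_subset[of E "V - X" x] finite_subset by (auto simp: graph_def)
  then have "card X \<le> card (?H \<union> X)"
    by (intro card_mono) auto
  also have "\<dots> \<le> p"
    using bound \<open>x \<in> V - X\<close> by (auto simp: comps_def)
  finally show ?thesis .
qed

lemma signature_count_le:
  fixes p k :: nat
  assumes "k \<le> p"
  shows "(p + 1) * 2 ^ (p * p) * 2 ^ (p * k) * 2 ^ (p * (p * (p + 1) + p + 1)) \<le> (2::nat) ^ (7 * p ^ 3)"
proof -
  have exponent: "p + p * p + p * p + p * (p * (p + 1) + p + 1) \<le> 7 * p ^ 3"
  proof (cases "p = 0")
    case False
    then have "p \<le> p * p" "p * p \<le> p * p * p"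
      by simp_all
    moreover have "p + p * p + p * p + p * (p * (p + 1) + p + 1) = p * p * p + 4 * (p * p) + 2 * p"
      by (simp add: algebra_simps)
    ultimately show ?thesis
      unfolding power3_eq_cube by linarith
  qed simp
  have "p + 1 \<le> (2::nat) ^ p"
    using less_exp[of p] by linarith
  moreover have "(2::nat) ^ (p * k) \<le> 2 ^ (p * p)"
    using assms by (intro power_increasing) auto
  ultimately have "(p + 1) * 2 ^ (p * p) * 2 ^ (p * k) * 2 ^ (p * (p * (p + 1) + p + 1))
      \<le> 2 ^ p * 2 ^ (p * p) * 2 ^ (p * p) * (2::nat) ^ (p * (p * (p + 1) + p + 1))"
    by (intro mult_mono) auto
  also have "\<dots> = 2 ^ (p + p * p + p * p + p * (p * (p + 1) + p + 1))"
    by (simp add: power_add)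
  also have "\<dots> \<le> 2 ^ (7 * p ^ 3)"
    using exponent by (rule power_increasing) simp
  finally show ?thesis .
qed

theorem mainTheorem4:
  "\<exists>c::nat. \<forall>(V::nat set) E Bs X p.
     graph V E \<and> Bs \<subseteq> balls V E \<and> X \<subseteq> V \<and> p = vertex_integrity V E
     \<and> (\<forall>H \<in> comps E (V - X). card (H \<union> X) \<le> p)
     \<longrightarrow> card (comps E (V - X) // twin_rel E X Bs (comps E (V - X))) \<le> 2 ^ (c * p ^ 3)"
proof (intro exI[of _ 7] allI impI, elim conjE)
  fix V :: "nat set" and E Bs X p
  assume G: "graph V E" and X: "X \<subseteq> V" and bound: "\<forall>H \<in> comps E (V - X). card (H \<union> X) \<le> p"
  let ?\<H> = "comps E (V - X)" and ?D = "p * (p + 1) + p"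
  show "card (?\<H> // twin_rel E X Bs ?\<H>) \<le> 2 ^ (7 * p ^ 3)"
  proof (cases "V - X = {}")
    case True
    then have "?\<H> = {}"
      by (auto simp: comps_def)
    then show ?thesis
      by simp
  next
    case False
    then have card_X: "card X \<le> p"
      using card_separator_le[OF G X bound] by blast
    have comp: "card (comp_of E (V - X) x) \<le> p" for x
      using card_comp_of_le[OF G X bound] .
    have "card X * (p + 1) + p \<le> ?D"
      using mult_right_mono[OF card_X, of "p + 1"] by simp
    then have "ball E r w = ball E ?D w" if "w \<in> V" "?D \<le> r" for w r
      using ball_stable[OF G X that(1) comp] that(2) by blast
    then have "card (?\<H> // twin_rel E X Bs ?\<H>) \<le> card (block_signature E X Bs ?D ` ?\<H>)"
      using card_twin_classes_le_card_block_signatures[OF G] by blast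
    also have "\<dots> \<le> (p + 1) * 2 ^ (p * p) * 2 ^ (p * card X) * 2 ^ (p * (?D + 1))"
      using G X comp by (intro card_block_signatures_le) (auto simp: comps_def finite_subset graph_def)
    also have "\<dots> \<le> 2 ^ (7 * p ^ 3)"
      using signature_count_le[OF card_X] by simp
    finally show ?thesis .
  qed
qed

end
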